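(* Let $(D,\mathrm{left},\mathrm{right})$ be an interval domain and $x\in D$ with $\Uparrow x\neq\emptyset$ in $D$. Then for every $\le$-filtered set $S\subseteq\max(D)$ that has an infimum $\bigwedge S$ in $(\max(D),\le)$: if $\bigwedge S\le\mathrm{left}(x)$, then there exists $s\in S$ with $s\le\mathrm{right}(x)$.
   Context: For a poset $(P,\sqsubseteq)$: directed (resp. filtered) sets are nonempty sets in which any two elements have an upper (resp. lower) bound in the set; $\bigsqcup S$ is the supremum; $x\ll y$ iff for every directed $S\subseteq P$ with a supremum, $y\sqsubseteq\bigsqcup S$ implies $x\sqsubseteq s$ for some $s\in S$; $\Uparrow x=\{a: x\ll a\}$, $\Downarrow x=\{a:a\ll x\}$. $P$ is continuous if there is $B\subseteq P$ such that for each $x$, $B\cap\Downarrow x$ contains a directed set with supremum $x$; a continuous dcpo is a continuous poset in which every directed set has a supremum. $\max(P)$ is the set of maximal elements, $x\sqcap y$ the infimum of $\{x,y\}$. The Scott topology consists of upper sets $U$ such that $\bigsqcup S\in U$ implies $S\cap U\ne\emptyset$ for directed $S$. An interval poset is a poset $D$ with functions $\mathrm{left},\mathrm{right}:D\to\max(D)$ such that (only named infima are assumed to exist): (i) $x=\mathrm{left}(x)\sqcap\mathrm{right}(x)$ for all $x$; (ii) if $\mathrm{right}(x)=\mathrm{left}(y)$ then $\mathrm{left}(x\sqcap y)=\mathrm{left}(x)$ and $\mathrm{right}(x\sqcap y)=\mathrm{right}(y)$; (iii) for $p\in\max(D)$ with $x\sqsubseteq p$: $\mathrm{left}(\mathrm{left}(x)\sqcap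 p)=\mathrm{left}(x)$, $\mathrm{right}(\mathrm{left}(x)\sqcap p)=p$, $\mathrm{left}(p\sqcap\mathrm{right}(x))=p$, $\mathrm{right}(p\sqcap\mathrm{right}(x))=\mathrm{right}(x)$. On $\max(D)$ define $a\le b$ iff $a=\mathrm{left}(z)$, $b=\mathrm{right}(z)$ for some $z\in D$; this is a partial order. For $p,q\in\max(D)$ let $[p,\cdot]=\mathrm{left}^{-1}(p)$ and $[\cdot,q]=\mathrm{right}^{-1}(q)$, regarded as subposets of $D$. An interval domain is an interval poset $(D,\mathrm{left},\mathrm{right})$ such that $D$ is a continuous dcpo and: (i) if $p\in\Uparrow x\cap\max(D)$ then $\Uparrow(\mathrm{left}(x)\sqcap p)\ne\emptyset$ and $\Uparrow(p\sqcap\mathrm{right}(x))\ne\emptyset$; (ii) for all $x\in D$ the following are equivalent: (a) $\Uparrow x\ne\emptyset$; (b) for all $y\in[\mathrm{left}(x),\cdot]$ with $y\sqsubseteq x$, $y\ll\mathrm{right}(y)$ in the poset $[\cdot,\mathrm{right}(y)]$; (c) for all $y\in[\cdot,\mathrm{right}(x)]$ with $y\sqsubseteq x$, $y\ll\mathrm{left}(y)$ in the poset $[\mathrm{left}(y),\cdot]$; (iii)(a) for every directed $S\subseteq[p,\cdot]$, $\mathrm{left}(\bigsqcup S)=p$ and $\mathrm{right}(\bigsqcup S)=\mathrm{right}(\bigsqcup T)$ for every directed $T\subseteq[q,\cdot]$ with $\mathrm{right}(T)=\mathrm{right}(S)$ (images); (iii)(b) for every directed $S\subseteq[\cdot,q]$,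 $\mathrm{right}(\bigsqcup S)=q$ and $\mathrm{left}(\bigsqcup S)=\mathrm{left}(\bigsqcup T)$ for every directed $T\subseteq[\cdot,p]$ with $\mathrm{left}(T)=\mathrm{left}(S)$; (iv) for all $x\in D$, $\{y\in\max(D): x\sqsubseteq y\}$ is compact in the relative Scott topology. *)

theory Defs
  imports Main
begin

definition partial_order_on_set :: "'a set \<Rightarrow> ('a \<Rightarrow> 'a \<Rightarrow> bool) \<Rightarrow> bool" where
  "partial_order_on_set D le \<longleftrightarrow>
     (\<forall>x\<in>D. le x x) \<and>
     (\<forall>x\<in>D. \<forall>y\<in>D. le x y \<and> le y x \<longrightarrow> x = y) \<and>
     (\<forall>x\<in>D. \<forall>y\<in>D. \<forall>z\<in>D. le x y \<and> le y z \<longrightarrow> le x z)"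

definition directed_in :: "'a set \<Rightarrow> ('a \<Rightarrow> 'a \<Rightarrow> bool) \<Rightarrow> 'a set \<Rightarrow> bool" where
  "directed_in E le S \<longleftrightarrow> S \<noteq> {} \<and> S \<subseteq> E \<and>
     (\<forall>a\<in>S. \<forall>b\<in>S. \<exists>c\<in>S. le a c \<and> le b c)"

definition filtered_in :: "'a set \<Rightarrow> ('a \<Rightarrow> 'a \<Rightarrow> bool) \<Rightarrow> 'a set \<Rightarrow> bool" where
  "filtered_in E le S \<longleftrightarrow> S \<noteq> {} \<and> S \<subseteq> E \<and>
     (\<forall>a\<in>S. \<forall>b\<in>S. \<exists>c\<in>S. le c a \<and> le c b)"

definition is_sup_in :: "'a set \<Rightarrow> ('a \<Rightarrow> 'a \<Rightarrow> bool) \<Rightarrow> 'a set \<Rightarrow> 'a \<Rightarrow> bool" where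
  "is_sup_in E le S s \<longleftrightarrow> s \<in> E \<and> (\<forall>a\<in>S. le a s) \<and>
     (\<forall>u\<in>E. (\<forall>a\<in>S. le a u) \<longrightarrow> le s u)"

definition is_inf_set_in :: "'a set \<Rightarrow> ('a \<Rightarrow> 'a \<Rightarrow> bool) \<Rightarrow> 'a set \<Rightarrow> 'a \<Rightarrow> bool" where
  "is_inf_set_in E le S m \<longleftrightarrow> m \<in> E \<and> (\<forall>a\<in>S. le m a) \<and>
     (\<forall>u\<in>E. (\<forall>a\<in>S. le u a) \<longrightarrow> le u m)"

definition is_inf_in :: "'a set \<Rightarrow> ('a \<Rightarrow> 'a \<Rightarrow> bool) \<Rightarrow> 'a \<Rightarrow> 'a \<Rightarrow> 'a \<Rightarrow> bool" where
  "is_inf_in E le a b z \<longleftrightarrow> is_inf_set_in E le {a, b} z"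

definition waybelow_in :: "'a set \<Rightarrow> ('a \<Rightarrow> 'a \<Rightarrow> bool) \<Rightarrow> 'a \<Rightarrow> 'a \<Rightarrow> bool" where
  "waybelow_in E le x y \<longleftrightarrow>
     (\<forall>S s. directed_in E le S \<and> is_sup_in E le S s \<and> le y s \<longrightarrow> (\<exists>a\<in>S. le x a))"

definition wayup :: "'a set \<Rightarrow> ('a \<Rightarrow> 'a \<Rightarrow> bool) \<Rightarrow> 'a \<Rightarrow> 'a set" where
  "wayup E le x = {a\<in>E. waybelow_in E le x a}"

definition waydown :: "'a set \<Rightarrow> ('a \<Rightarrow> 'a \<Rightarrow> bool) \<Rightarrow> 'a \<Rightarrow> 'a set" where
  "waydown E le x = {a\<in>E. waybelow_in E le a x}"

definition maxel :: "'a set \<Rightarrow> ('a \<Rightarrow> 'a \<Rightarrow> bool) \<Rightarrow> 'a set" where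
  "maxel D le = {x\<in>D. \<forall>y\<in>D. le x y \<longrightarrow> y = x}"

definition continuous_poset :: "'a set \<Rightarrow> ('a \<Rightarrow> 'a \<Rightarrow> bool) \<Rightarrow> bool" where
  "continuous_poset D le \<longleftrightarrow> partial_order_on_set D le \<and>
     (\<exists>B\<subseteq>D. \<forall>x\<in>D. \<exists>S. S \<subseteq> B \<inter> waydown D le x \<and> directed_in D le S \<and> is_sup_in D le S x)"

definition continuous_dcpo :: "'a set \<Rightarrow> ('a \<Rightarrow> 'a \<Rightarrow> bool) \<Rightarrow> bool" where
  "continuous_dcpo D le \<longleftrightarrow> continuous_poset D le \<and>
     (\<forall>S. directed_in D le S \<longrightarrow> (\<exists>s. is_sup_in D le S s))"

definition scott_open :: "'a set \<Rightarrow> ('a \<Rightarrow> 'a \<Rightarrow> bool) \<Rightarrow> 'a set \<Rightarrow> bool" where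
  "scott_open D le U \<longleftrightarrow> U \<subseteq> D \<and> (\<forall>x\<in>U. \<forall>y\<in>D. le x y \<longrightarrow> y \<in> U) \<and>
     (\<forall>S s. directed_in D le S \<and> is_sup_in D le S s \<and> s \<in> U \<longrightarrow> S \<inter> U \<noteq> {})"

definition scott_compact_rel :: "'a set \<Rightarrow> ('a \<Rightarrow> 'a \<Rightarrow> bool) \<Rightarrow> 'a set \<Rightarrow> 'a set \<Rightarrow> bool" where
  "scott_compact_rel D le M K \<longleftrightarrow> K \<subseteq> M \<and>
     (\<forall>\<U>. (\<forall>U\<in>\<U>. scott_open D le U) \<and> K \<subseteq> \<Union>{U \<inter> M | U. U \<in> \<U>} \<longrightarrow>
        (\<exists>\<F>\<subseteq>\<U>. finite \<F> \<and> K \<subseteq> \<Union>{U \<inter> M | U. U \<in> \<F>}))"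

definition interval_poset :: "'a set \<Rightarrow> ('a \<Rightarrow> 'a \<Rightarrow> bool) \<Rightarrow> ('a \<Rightarrow> 'a) \<Rightarrow> ('a \<Rightarrow> 'a) \<Rightarrow> bool" where
  "interval_poset D le left right \<longleftrightarrow>
     partial_order_on_set D le \<and>
     (\<forall>x\<in>D. left x \<in> maxel D le \<and> right x \<in> maxel D le) \<and>
     (\<forall>x\<in>D. is_inf_in D le (left x) (right x) x) \<and>
     (\<forall>x\<in>D. \<forall>y\<in>D. right x = left y \<longrightarrow>
        (\<exists>z. is_inf_in D le x y z \<and> left z = left x \<and> right z = right y)) \<and>
     (\<forall>x\<in>D. \<forall>p\<in>maxel D le. le x p \<longrightarrow>
        (\<exists>z. is_inf_in D le (left x) p z \<and> left z = left x \<and> right z = p) \<and>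
        (\<exists>z. is_inf_in D le p (right x) z \<and> left z = p \<and> right z = right x))"

definition max_le :: "'a set \<Rightarrow> ('a \<Rightarrow> 'a) \<Rightarrow> ('a \<Rightarrow> 'a) \<Rightarrow> 'a \<Rightarrow> 'a \<Rightarrow> bool" where
  "max_le D left right a b \<longleftrightarrow> (\<exists>z\<in>D. left z = a \<and> right z = b)"

definition left_fibre :: "'a set \<Rightarrow> ('a \<Rightarrow> 'a) \<Rightarrow> 'a \<Rightarrow> 'a set" where
  "left_fibre D left p = {z\<in>D. left z = p}"

definition right_fibre :: "'a set \<Rightarrow> ('a \<Rightarrow> 'a) \<Rightarrow> 'a \<Rightarrow> 'a set" where
  "right_fibre D right q = {z\<in>D. right z = q}"

definition interval_domain :: "'a set \<Rightarrow> ('a \<Rightarrow> 'a \<Rightarrow> bool) \<Rightarrow> ('a \<Rightarrow> 'a) \<Rightarrow> ('a \<Rightarrow> 'a) \<Rightarrow> bool" where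
  "interval_domain D le left right \<longleftrightarrow>
     interval_poset D le left right \<and> continuous_dcpo D le \<and>
     \<comment> \<open>(i)\<close>
     (\<forall>x\<in>D. \<forall>p\<in>wayup D le x \<inter> maxel D le.
        (\<forall>z. is_inf_in D le (left x) p z \<longrightarrow> wayup D le z \<noteq> {}) \<and>
        (\<forall>z. is_inf_in D le p (right x) z \<longrightarrow> wayup D le z \<noteq> {})) \<and>
     \<comment> \<open>(ii)\<close>
     (\<forall>x\<in>D.
        (wayup D le x \<noteq> {} \<longleftrightarrow>
          (\<forall>y\<in>left_fibre D left (left x). le y x \<longrightarrow>
             waybelow_in (right_fibre D right (right y)) le y (right y))) \<and>
        (wayup D le x \<noteq> {} \<longleftrightarrow>
          (\<forall>y\<in>right_fibre D right (right x). le y x \<longrightarrow>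
             waybelow_in (left_fibre D left (left y)) le y (left y)))) \<and>
     \<comment> \<open>(iii)(a)\<close>
     (\<forall>p\<in>maxel D le. \<forall>S s. directed_in D le S \<and> S \<subseteq> left_fibre D left p \<and> is_sup_in D le S s \<longrightarrow>
        left s = p \<and>
        (\<forall>q\<in>maxel D le. \<forall>T t. directed_in D le T \<and> T \<subseteq> left_fibre D left q \<and>
            right ` T = right ` S \<and> is_sup_in D le T t \<longrightarrow> right s = right t)) \<and>
     \<comment> \<open>(iii)(b)\<close>
     (\<forall>q\<in>maxel D le. \<forall>S s. directed_in D le S \<and> S \<subseteq> right_fibre D right q \<and> is_sup_in D le S s \<longrightarrow>
        right s = q \<and>
        (\<forall>p\<in>maxel D le. \<forall>T t. directed_in D le T \<and> T \<subseteq> right_fibre D right p \<and>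
            left ` T = left ` S \<and> is_sup_in D le T t \<longrightarrow> left s = left t)) \<and>
     \<comment> \<open>(iv)\<close>
     (\<forall>x\<in>D. scott_compact_rel D le (maxel D le) {y\<in>maxel D le. le x y})"

end

theory Submission
  imports Defs
begin

text \<open>Write \<open>m\<close> for the infimum of \<open>S\<close> and \<open>[p, q]\<close> for the unique element of \<open>D\<close> with left end
  \<open>p\<close> and right end \<open>q\<close>. Since \<open>m \<le> left x\<close>, the interval \<open>[m, left x]\<close> can be concatenated with
  \<open>x\<close>, giving \<open>w \<sqsubseteq> x\<close> with \<open>left w = m\<close> and \<open>right w = right x\<close>; axiom (ii) turns \<open>\<Up>x \<noteq> {}\<close>
  into \<open>w \<ll> m\<close> in \<open>[m, \<cdot>]\<close>. In \<open>[m, \<cdot>]\<close> the intervals \<open>[m, s]\<close>, \<open>s \<in> S\<close>, form a directed set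
  (shrinking \<open>s\<close> enlarges \<open>[m, s]\<close>) whose supremum is \<open>m\<close>, because the right end of an upper
  bound is a lower bound of \<open>S\<close>. Hence \<open>w \<sqsubseteq> [m, s]\<close> for some \<open>s \<in> S\<close>, and then
  \<open>s \<le> right w = right x\<close>.\<close>

locale interval_poset_struct =
  fixes D :: "'a set" and le :: "'a \<Rightarrow> 'a \<Rightarrow> bool" (infix "\<sqsubseteq>" 50)
    and left right :: "'a \<Rightarrow> 'a"
  assumes interval_poset: "interval_poset D le left right"
begin

abbreviation max_below :: "'a \<Rightarrow> 'a \<Rightarrow> bool" (infix "\<preceq>" 50) where
  "p \<preceq> q \<equiv> max_le D left right p q"

lemma refl_on_D: "x \<in> D \<Longrightarrow> x \<sqsubseteq> x"
  using interval_poset by (simp add: interval_poset_def partial_order_on_set_def)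

lemma antisym_on_D: "x \<in> D \<Longrightarrow> y \<in> D \<Longrightarrow> x \<sqsubseteq> y \<Longrightarrow> y \<sqsubseteq> x \<Longrightarrow> x = y"
  using interval_poset unfolding interval_poset_def partial_order_on_set_def by blast

lemma trans_on_D: "x \<in> D \<Longrightarrow> y \<in> D \<Longrightarrow> z \<in> D \<Longrightarrow> x \<sqsubseteq> y \<Longrightarrow> y \<sqsubseteq> z \<Longrightarrow> x \<sqsubseteq> z"
  using interval_poset unfolding interval_poset_def partial_order_on_set_def by blast

lemma left_right_maxel: "x \<in> D \<Longrightarrow> left x \<in> maxel D le \<and> right x \<in> maxel D le"
  using interval_poset by (simp add: interval_poset_def)

lemma inf_left_right: "x \<in> D \<Longrightarrow> is_inf_in D le (left x) (right x) x"
  using interval_poset by (simp add: interval_poset_def)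

lemma le_left: "x \<in> D \<Longrightarrow> x \<sqsubseteq> left x"
  using inf_left_right by (simp add: is_inf_in_def is_inf_set_in_def)

lemma le_right: "x \<in> D \<Longrightarrow> x \<sqsubseteq> right x"
  using inf_left_right by (simp add: is_inf_in_def is_inf_set_in_def)

lemma maxel_in_D: "p \<in> maxel D le \<Longrightarrow> p \<in> D"
  by (simp add: maxel_def)

lemma interval_eqI:
  assumes "x \<in> D" "y \<in> D" "left x = left y" "right x = right y"
  shows "x = y"
proof (rule antisym_on_D)
  show "x \<sqsubseteq> y" "y \<sqsubseteq> x"
    using inf_left_right[of x] inf_left_right[of y] assms
    by (simp_all add: is_inf_in_def is_inf_set_in_def)
qed (use assms in auto)

lemma left_right_of_maxel:
  assumes "p \<in> maxel D le"
  shows "left p = p" "right p = p"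
proof -
  have "p \<in> D" "\<forall>y\<in>D. p \<sqsubseteq> y \<longrightarrow> y = p"
    using assms by (simp_all add: maxel_def)
  then show "left p = p" "right p = p"
    using le_left le_right left_right_maxel maxel_in_D by blast+
qed

lemma concatenation:
  assumes "x \<in> D" "y \<in> D" "right x = left y"
  obtains z where "z \<in> D" "z \<sqsubseteq> x" "z \<sqsubseteq> y" "left z = left x" "right z = right y"
proof -
  have "\<forall>x\<in>D. \<forall>y\<in>D. right x = left y \<longrightarrow>
      (\<exists>z. is_inf_in D le x y z \<and> left z = left x \<and> right z = right y)"
    using interval_poset by (simp add: interval_poset_def)
  then obtain z where "is_inf_in D le x y z" "left z = left x" "right z = right y"
    using assms by blast
  then show ?thesis
    using that unfolding is_inf_in_def is_inf_set_in_def by blast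
qed

lemma max_le_right_of_le:
  assumes "x \<in> D" "p \<in> maxel D le" "x \<sqsubseteq> p"
  shows "p \<preceq> right x"
proof -
  have "\<forall>x\<in>D. \<forall>p\<in>maxel D le. x \<sqsubseteq> p \<longrightarrow>
      (\<exists>z. is_inf_in D le (left x) p z \<and> left z = left x \<and> right z = p) \<and>
      (\<exists>z. is_inf_in D le p (right x) z \<and> left z = p \<and> right z = right x)"
    using interval_poset unfolding interval_poset_def by (elim conjE)
  then obtain z where "is_inf_in D le p (right x) z" "left z = p" "right z = right x"
    using assms by blast
  moreover have "z \<in> D"
    using calculation(1) by (simp add: is_inf_in_def is_inf_set_in_def)
  ultimately show ?thesis
    unfolding max_le_def by blast
qed

lemma right_antimono:
  assumes "x \<in> D" "y \<in> D" "x \<sqsubseteq> y"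
  shows "right y \<preceq> right x"
proof (rule max_le_right_of_le[OF assms(1)])
  show "right y \<in> maxel D le"
    using left_right_maxel[OF assms(2)] by blast
  then show "x \<sqsubseteq> right y"
    using trans_on_D[OF assms(1,2) _ assms(3) le_right[OF assms(2)]] maxel_in_D by blast
qed

lemma max_le_antisym:
  assumes p: "p \<in> maxel D le" and "p \<preceq> q" "q \<preceq> p"
  shows "p = q"
proof -
  obtain x y where x: "x \<in> D" "left x = p" "right x = q" and y: "y \<in> D" "left y = q" "right y = p"
    using assms unfolding max_le_def by blast
  obtain z where z: "z \<in> D" "z \<sqsubseteq> x" "left z = p" "right z = p"
    using concatenation[OF x(1) y(1)] x y by metis
  have "z = p"
    using interval_eqI[OF z(1) maxel_in_D[OF p]] z left_right_of_maxel[OF p] by simp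
  then have "x = p"
    using z(2) x(1) p by (simp add: maxel_def)
  then show ?thesis
    using x(3) left_right_of_maxel[OF p] by simp
qed

definition interval :: "'a \<Rightarrow> 'a \<Rightarrow> 'a" where
  "interval p q = (THE z. z \<in> D \<and> left z = p \<and> right z = q)"

lemma interval_ends:
  assumes "p \<preceq> q"
  shows "interval p q \<in> D" "left (interval p q) = p" "right (interval p q) = q"
proof -
  obtain z where "z \<in> D" "left z = p" "right z = q"
    using assms unfolding max_le_def by blast
  then have "\<exists>!z. z \<in> D \<and> left z = p \<and> right z = q"
    using interval_eqI by metis
  then have "interval p q \<in> D \<and> left (interval p q) = p \<and> right (interval p q) = q"
    unfolding interval_def by (rule theI')
  then show "interval p q \<in> D" "left (interval p q) = p" "right (interval p q) = q"
    by auto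
qed

lemma interval_antimono:
  assumes "p \<preceq> q" "q \<preceq> r"
  shows "interval p r \<sqsubseteq> interval p q"
proof -
  obtain u where u: "u \<in> D" "left u = q" "right u = r"
    using assms(2) unfolding max_le_def by blast
  obtain z where z: "z \<in> D" "z \<sqsubseteq> interval p q" "left z = p" "right z = r"
    using concatenation[OF interval_ends(1)[OF assms(1)] u(1)] interval_ends[OF assms(1)] u by metis
  have "p \<preceq> r"
    using z unfolding max_le_def by blast
  then have "z = interval p r"
    using interval_eqI[OF z(1) interval_ends(1)] z interval_ends(2,3) by simp
  then show ?thesis
    using z(2) by simp
qed

lemma intervals_directed:
  assumes S: "filtered_in (maxel D le) (\<preceq>) S" and below_S: "\<forall>s\<in>S. m \<preceq> s"
  shows "directed_in (left_fibre D left m) le (interval m ` S)"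
  unfolding directed_in_def
proof (intro conjI ballI)
  show "interval m ` S \<noteq> {}"
    using S by (simp add: filtered_in_def)
  show "interval m ` S \<subseteq> left_fibre D left m"
    using below_S interval_ends(1,2) by (auto simp: left_fibre_def)
  fix a b assume "a \<in> interval m ` S" "b \<in> interval m ` S"
  then obtain s t where st: "s \<in> S" "t \<in> S" and ab: "a = interval m s" "b = interval m t"
    by blast
  obtain c where c: "c \<in> S" "c \<preceq> s" "c \<preceq> t"
    using S st unfolding filtered_in_def by blast
  have "a \<sqsubseteq> interval m c" "b \<sqsubseteq> interval m c"
    using ab interval_antimono[OF bspec[OF below_S c(1)]] c(2,3) by simp_all
  then show "\<exists>c\<in>interval m ` S. a \<sqsubseteq> c \<and> b \<sqsubseteq> c"
    using c(1) by blast
qed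

lemma intervals_sup:
  assumes inf: "is_inf_set_in (maxel D le) (\<preceq>) S m"
  shows "is_sup_in (left_fibre D left m) le (interval m ` S) m"
proof -
  have m: "m \<in> maxel D le" "left m = m" "right m = m" "m \<in> D"
    using inf left_right_of_maxel maxel_in_D by (auto simp: is_inf_set_in_def)
  have below_S: "\<forall>s\<in>S. m \<preceq> s"
    using inf by (simp add: is_inf_set_in_def)
  have "m \<sqsubseteq> u" if u: "u \<in> D" "left u = m" and ub: "\<forall>s\<in>S. interval m s \<sqsubseteq> u" for u
  proof -
    have "\<forall>s\<in>S. right u \<preceq> s"
      using ub below_S interval_ends u by (metis right_antimono)
    then have "right u \<preceq> m"
      using inf left_right_maxel u(1) by (simp add: is_inf_set_in_def)
    moreover have "m \<preceq> right u"
      using u unfolding max_le_def by blast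
    ultimately have "right u = m"
      using m(1) max_le_antisym by blast
    then have "u = m"
      using interval_eqI[OF u(1) m(4)] u(2) m(2,3) by simp
    then show ?thesis
      using m(4) refl_on_D by simp
  qed
  moreover have "\<forall>s\<in>S. interval m s \<sqsubseteq> m"
    using below_S interval_ends le_left by metis
  ultimately show ?thesis
    using m by (auto simp: is_sup_in_def left_fibre_def)
qed

end

lemma interval_domain_waybelow_left:
  assumes "interval_domain D le left right" "x \<in> D" "wayup D le x \<noteq> {}"
    and "y \<in> D" "right y = right x" "le y x"
  shows "waybelow_in (left_fibre D left (left y)) le y (left y)"
proof -
  from assms(1) have "\<forall>x\<in>D. wayup D le x \<noteq> {} \<longrightarrow>
      (\<forall>y\<in>right_fibre D right (right x). le y x \<longrightarrow>
         waybelow_in (left_fibre D left (left y)) le y (left y))"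
    unfolding interval_domain_def by (elim conjE) fast
  then show ?thesis
    using assms(2-6) by (simp add: right_fibre_def)
qed

theorem mainTheorem11:
  fixes D :: "'a set" and le :: "'a \<Rightarrow> 'a \<Rightarrow> bool" and left right :: "'a \<Rightarrow> 'a"
    and x :: 'a and S :: "'a set" and m :: 'a
  assumes "interval_domain D le left right"
    and "x \<in> D"
    and "wayup D le x \<noteq> {}"
    and "filtered_in (maxel D le) (max_le D left right) S"
    and "is_inf_set_in (maxel D le) (max_le D left right) S m"
    and "max_le D left right m (left x)"
  shows "\<exists>s\<in>S. max_le D left right s (right x)"
proof -
  interpret interval_poset_struct D le left right
    using assms(1) by unfold_locales (simp add: interval_domain_def)
  obtain z where "z \<in> D" "left z = m" "right z = left x"
    using assms(6) unfolding max_le_def by blast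
  then obtain w where w: "w \<in> D" "le w x" "left w = m" "right w = right x"
    using concatenation[OF _ assms(2)] by metis
  have "waybelow_in (left_fibre D left m) le w m"
    using interval_domain_waybelow_left[OF assms(1-3) w(1)] w by simp
  moreover have below_S: "\<forall>s\<in>S. max_le D left right m s" and "m \<in> D"
    using assms(5) maxel_in_D by (simp_all add: is_inf_set_in_def)
  ultimately obtain s where s: "s \<in> S" "le w (interval m s)"
    using intervals_directed[OF assms(4)] intervals_sup[OF assms(5)] refl_on_D
    unfolding waybelow_in_def by blast
  then have "max_le D left right s (right w)"
    using right_antimono[OF w(1) interval_ends(1)] interval_ends(3) below_S by metis
  then show ?thesis
    using s(1) w(4) by auto
qed

end
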